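(* Let $m\ge 0$ and $N\ge m+1$ be integers. For $k\ge 0$ put $c_k(N)=\sum_{i=0}^{N-1} i^k$ (with $0^0=1$), and let $H_m(N)$ be the $(m+1)\times(m+1)$ Hankel matrix whose $(r,s)$ entry ($1\le r,s\le m+1$) is $c_{r+s-2}(N)$. For $0\le i\le m$ let $M^{(m)}_{(i+1),1}(N)$ be the minor of $H_m(N)$ obtained by deleting row $i+1$ and column $1$ (for $m=0$ this minor is $1$), and set $$a_{im}(N)=(-1)^i\,\frac{M^{(m)}_{(i+1),1}(N)}{\det H_m(N)},\qquad h_m(n,N)=\sum_{i=0}^m a_{im}(N)\,n^i .$$ Then for every integer $n$ with $0\le n\le N-1$, $$h_m(n,N)=\frac{(m+1)^2}{N}\,{}_3F_2\!\left(\begin{matrix}-m,\ n+1,\ m+2\\ 2,\ N+1\end{matrix};1\right)=\frac{(m+1)^2}{N}\,Q_m(-1-n;\,1,\,0,\,-1-N),$$ where $Q_m$ denotes the Hahn polynomial defined below.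
   Context: ${}_3F_2\!\left(\begin{matrix}a_1,a_2,a_3\\ b_1,b_2\end{matrix};1\right)=\sum_{k\ge0}\frac{(a_1)_k(a_2)_k(a_3)_k}{(b_1)_k(b_2)_k\,k!}$, with $(a)_k=a(a+1)\cdots(a+k-1)$ the Pochhammer symbol; when $a_1=-m$ the sum terminates at $k=m$. The Hahn polynomial is defined by $Q_m(y;\alpha,\beta,M)={}_3F_2\!\left(\begin{matrix}-m,\ m+\alpha+\beta+1,\ -y\\ \alpha+1,\ -M\end{matrix};1\right)$, the sum taken from $k=0$ to $m$. The functions $h_m(n,N)$ are the discrete Shmaliy polynomials. *)

theory Defs
  imports Complex_Main "Jordan_Normal_Form.Determinant"
begin

definition powsum :: "nat \<Rightarrow> nat \<Rightarrow> real" where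
  "powsum k N = (\<Sum>i<N. (real i) ^ k)"

(* (m+1) x (m+1) Hankel matrix, 0-based indices: entry (r,s) is c_{r+s}(N) *)
definition hankelH :: "nat \<Rightarrow> nat \<Rightarrow> real mat" where
  "hankelH m N = mat (m+1) (m+1) (\<lambda>(r,s). powsum (r+s) N)"

(* a_{im}(N) = (-1)^i M^{(m)}_{(i+1),1}(N) / det H_m(N); minor deletes row i+1, column 1 (1-based) *)
definition coef_a :: "nat \<Rightarrow> nat \<Rightarrow> nat \<Rightarrow> real" where
  "coef_a i m N = (-1) ^ i * det (mat_delete (hankelH m N) i 0) / det (hankelH m N)"

definition shmaliy_h :: "nat \<Rightarrow> real \<Rightarrow> nat \<Rightarrow> real" where
  "shmaliy_h m n N = (\<Sum>i\<le>m. coef_a i m N * n ^ i)"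

definition hyp3F2_term :: "nat \<Rightarrow> real \<Rightarrow> real \<Rightarrow> real \<Rightarrow> real \<Rightarrow> real" where
  "hyp3F2_term m a2 a3 b1 b2 =
     (\<Sum>k\<le>m. pochhammer (- real m) k * pochhammer a2 k * pochhammer a3 k
              / (pochhammer b1 k * pochhammer b2 k * fact k))"

definition hahnQ :: "nat \<Rightarrow> real \<Rightarrow> real \<Rightarrow> real \<Rightarrow> real \<Rightarrow> real" where
  "hahnQ m y \<alpha> \<beta> M = hyp3F2_term m (real m + \<alpha> + \<beta> + 1) (- y) (\<alpha> + 1) (- M)"

end

theory Submission
  imports Defs "HOL-Computational_Algebra.Polynomial"
begin

(* For the discrete inner product <f, g> = sum_{x<N} f(x) g(x), the polynomial h_m(., N) represents
   evaluation at 0 on polynomials of degree at most m: its coefficient vector is the first row of the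
   inverse of the Gram matrix H_m(N) of the monomials, which is nonsingular because N > m. Such a
   representer of degree at most m is unique on {0, ..., N-1}, since the difference of two of them is
   orthogonal to itself. The 3F2 expression is a polynomial of degree at most m in n, and testing it
   against the falling factorials (M - x)(M - x - 1)...(M - x - j + 1), M = N - 1, reduces via the
   convolution sum_{x<=M} C(x+k,k) C(M-x,j) = C(M+k+1,k+j+1) to the alternating identity
   sum_k (-1)^k C(m+1,k+1) C(m+k+1,m-j) = C(m,j), an (m+1)-st finite difference of a polynomial
   of degree m-j. *)

section \<open>Representing evaluation at 0\<close>

definition reproduces_value_at_0 :: "nat \<Rightarrow> nat \<Rightarrow> (real \<Rightarrow> real) \<Rightarrow> bool" where
  "reproduces_value_at_0 m N f \<longleftrightarrow>
     (\<forall>p. degree p \<le> m \<longrightarrow> (\<Sum>x<N. f (real x) * poly p (real x)) = poly p 0)"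

lemma graded_basis_spans:
  fixes b :: "nat \<Rightarrow> 'a::field poly"
  assumes degree_b: "\<And>j. j \<le> m \<Longrightarrow> degree (b j) = j"
    and b_nonzero: "\<And>j. j \<le> m \<Longrightarrow> b j \<noteq> 0"
    and "degree p \<le> m"
  shows "\<exists>c. p = (\<Sum>j\<le>m. smult (c j) (b j))"
proof -
  have "\<exists>c. p = (\<Sum>j<n. smult (c j) (b j))" if "n \<le> Suc m" "\<forall>i\<ge>n. coeff p i = 0" for n p
    using that
  proof (induction n arbitrary: p)
    case 0
    then show ?case by (simp add: poly_eq_iff)
  next
    case (Suc n)
    have "n \<le> m"
      using Suc.prems(1) by simp
    have "coeff (b n) n \<noteq> 0"
      using degree_b[OF \<open>n \<le> m\<close>] b_nonzero[OF \<open>n \<le> m\<close>] by (metis leading_coeff_0_iff)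
    define c where "c = coeff p n / coeff (b n) n"
    have "coeff (p - smult c (b n)) i = 0" if "n \<le> i" for i
    proof (cases "i = n")
      case True
      then show ?thesis
        using \<open>coeff (b n) n \<noteq> 0\<close> by (simp add: c_def)
    next
      case False
      then show ?thesis
        using that Suc.prems(2) degree_b[OF \<open>n \<le> m\<close>] by (simp add: coeff_eq_0)
    qed
    then obtain c' where "p - smult c (b n) = (\<Sum>j<n. smult (c' j) (b j))"
      using Suc.IH[of "p - smult c (b n)"] \<open>n \<le> m\<close> by auto
    then have "p = (\<Sum>j<Suc n. smult ((c'(n := c)) j) (b j))"
      by (simp add: algebra_simps)
    then show ?case by blast
  qed
  from this[of "Suc m" p] show ?thesis
    using assms(3) by (auto simp: lessThan_Suc_atMost coeff_eq_0)
qed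

lemma reproduces_value_at_0_if_basis:
  fixes b :: "nat \<Rightarrow> real poly"
  assumes "\<And>j. j \<le> m \<Longrightarrow> degree (b j) = j" "\<And>j. j \<le> m \<Longrightarrow> b j \<noteq> 0"
    and reproduces_b: "\<And>j. j \<le> m \<Longrightarrow> (\<Sum>x<N. f (real x) * poly (b j) (real x)) = poly (b j) 0"
  shows "reproduces_value_at_0 m N f"
  unfolding reproduces_value_at_0_def
proof (intro allI impI)
  fix p :: "real poly"
  assume "degree p \<le> m"
  then obtain c where p: "p = (\<Sum>j\<le>m. smult (c j) (b j))"
    using graded_basis_spans assms(1,2) by blast
  have "(\<Sum>x<N. f (real x) * poly p (real x)) = (\<Sum>j\<le>m. c j * (\<Sum>x<N. f (real x) * poly (b j) (real x)))"
    unfolding p poly_sum poly_smult sum_distrib_left by (subst sum.swap) (simp add: ac_simps)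
  also have "\<dots> = poly p 0"
    unfolding p poly_sum poly_smult by (simp add: reproduces_b)
  finally show "(\<Sum>x<N. f (real x) * poly p (real x)) = poly p 0" .
qed

lemma reproduces_value_at_0_unique:
  assumes "reproduces_value_at_0 m N (poly p)" "reproduces_value_at_0 m N (poly q)"
    and "degree p \<le> m" "degree q \<le> m" "x < N"
  shows "poly p (real x) = poly q (real x)"
proof -
  have "degree (p - q) \<le> m"
    using assms(3,4) by (simp add: degree_diff_le)
  then have "(\<Sum>y<N. (poly (p - q) (real y))^2)
      = (\<Sum>y<N. poly p (real y) * poly (p - q) (real y)) - (\<Sum>y<N. poly q (real y) * poly (p - q) (real y))"
    by (simp add: power2_eq_square left_diff_distrib sum_subtractf)
  also have "\<dots> = poly (p - q) 0 - poly (p - q) 0"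
    using assms(1,2) \<open>degree (p - q) \<le> m\<close> unfolding reproduces_value_at_0_def by (simp only:)
  finally have "(\<Sum>y<N. (poly (p - q) (real y))^2) = 0"
    by simp
  then have "poly (p - q) (real x) = 0"
    using assms(5) by (subst (asm) sum_nonneg_eq_0_iff) auto
  then show ?thesis by simp
qed

section \<open>The Hankel system\<close>

lemma hankelH_carrier: "hankelH m N \<in> carrier_mat (m + 1) (m + 1)"
  unfolding hankelH_def by simp

lemma hankelH_index [simp]:
  "r < m + 1 \<Longrightarrow> s < m + 1 \<Longrightarrow> hankelH m N $$ (r, s) = powsum (r + s) N"
  unfolding hankelH_def by simp

lemma hankelH_mult_vec_index:
  assumes "v \<in> carrier_vec (m + 1)" "r < m + 1"
  shows "(hankelH m N *\<^sub>v v) $ r = (\<Sum>s\<le>m. powsum (r + s) N * v $ s)"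
  using assms hankelH_carrier[of m N]
  by (auto simp: scalar_prod_def atLeast0LessThan lessThan_Suc_atMost intro!: sum.cong)

lemma powsum_quadratic_form:
  "(\<Sum>r\<le>m. a r * (\<Sum>s\<le>m. powsum (r + s) N * a s)) = (\<Sum>x<N. (\<Sum>r\<le>m. a r * real x ^ r)^2)"
  unfolding powsum_def power2_eq_square sum_distrib_left sum_distrib_right sum_product
  by (subst sum.swap, rule sum.cong, simp, subst sum.swap) (simp add: power_add ac_simps)

lemma det_hankelH_nonzero:
  assumes "m + 1 \<le> N"
  shows "det (hankelH m N) \<noteq> 0"
proof
  assume "det (hankelH m N) = 0"
  then obtain v where v: "v \<in> carrier_vec (m + 1)" "v \<noteq> 0\<^sub>v (m + 1)" "hankelH m N *\<^sub>v v = 0\<^sub>v (m + 1)"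
    using det_0_iff_vec_prod_zero_field[OF hankelH_carrier] by blast
  define p where "p = (\<Sum>r\<le>m. monom (v $ r) r)"
  have "(\<Sum>x<N. (poly p (real x))^2) = (\<Sum>r\<le>m. v $ r * (\<Sum>s\<le>m. powsum (r + s) N * v $ s))"
    unfolding powsum_quadratic_form p_def poly_sum poly_monom ..
  also have "\<dots> = (\<Sum>r\<le>m. v $ r * (hankelH m N *\<^sub>v v) $ r)"
    using v(1) by (simp add: hankelH_mult_vec_index)
  also have "\<dots> = 0"
    using v(3) by simp
  finally have "poly p (real x) = 0" if "x < N" for x
    using that by (subst (asm) sum_nonneg_eq_0_iff) auto
  moreover have "degree p \<le> m"
    unfolding p_def by (intro degree_sum_le) (auto intro: order.trans[OF degree_monom_le])
  ultimately have "p = 0"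
    using assms by (intro poly_eqI_degree[of "real ` {..<N}"]) (auto simp: card_image)
  then have "v $ r = 0" if "r < m + 1" for r
    using coeff_sum_monom[of r m "\<lambda>r. v $ r"] that unfolding p_def by simp
  then have "v = 0\<^sub>v (m + 1)"
    using v(1) by (intro eq_vecI) auto
  with v(2) show False ..
qed

lemma coef_a_moment:
  assumes "m + 1 \<le> N" "j \<le> m"
  shows "(\<Sum>i\<le>m. coef_a i m N * powsum (i + j) N) = (if j = 0 then 1 else 0)"
proof -
  let ?H = "hankelH m N"
  have "(\<Sum>i\<le>m. (-1)^i * det (mat_delete ?H i 0) * powsum (i + j) N) = (adj_mat ?H * ?H) $$ (0, j)"
    using assms hankelH_carrier[of m N]
    by (auto simp: scalar_prod_def adj_mat_def cofactor_def atLeast0LessThan lessThan_Suc_atMost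
        intro!: sum.cong)
  also have "\<dots> = (det ?H \<cdot>\<^sub>m 1\<^sub>m (m + 1)) $$ (0, j)"
    using adj_mat(3)[OF hankelH_carrier] by simp
  also have "\<dots> = det ?H * (if j = 0 then 1 else 0)"
    using assms by auto
  finally show ?thesis
    using det_hankelH_nonzero[OF assms(1)]
    unfolding coef_a_def by (simp add: sum_divide_distrib[symmetric] ac_simps)
qed

definition shmaliy_poly :: "nat \<Rightarrow> nat \<Rightarrow> real poly" where
  "shmaliy_poly m N = (\<Sum>i\<le>m. monom (coef_a i m N) i)"

lemma poly_shmaliy_poly: "poly (shmaliy_poly m N) y = shmaliy_h m y N"
  unfolding shmaliy_poly_def shmaliy_h_def poly_sum poly_monom ..

lemma degree_shmaliy_poly: "degree (shmaliy_poly m N) \<le> m"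
  unfolding shmaliy_poly_def by (intro degree_sum_le) (auto intro: order.trans[OF degree_monom_le])

lemma reproduces_value_at_0_shmaliy_poly:
  assumes "m + 1 \<le> N"
  shows "reproduces_value_at_0 m N (poly (shmaliy_poly m N))"
proof (rule reproduces_value_at_0_if_basis[where b = "monom 1"])
  fix j
  assume "j \<le> m"
  have "(\<Sum>x<N. shmaliy_h m (real x) N * real x ^ j) = (\<Sum>i\<le>m. coef_a i m N * powsum (i + j) N)"
    unfolding shmaliy_h_def powsum_def sum_distrib_right sum_distrib_left
    by (subst sum.swap) (simp add: power_add ac_simps)
  then show "(\<Sum>x<N. poly (shmaliy_poly m N) (real x) * poly (monom 1 j) (real x)) = poly (monom 1 j) 0"
    using coef_a_moment[OF assms \<open>j \<le> m\<close>] by (simp add: poly_shmaliy_poly poly_monom)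
qed (simp_all add: degree_monom_eq)

section \<open>Binomial sums\<close>

lemma alternating_sum_choose_Suc:
  fixes f :: "nat \<Rightarrow> 'a::comm_ring_1"
  shows "(\<Sum>l\<le>Suc n. (-1)^l * of_nat (Suc n choose l) * f l)
       = (\<Sum>l\<le>n. (-1)^l * of_nat (n choose l) * (f l - f (Suc l)))"
proof -
  have "(\<Sum>l\<le>Suc n. (-1)^l * of_nat (Suc n choose l) * f l)
      = f 0 + (\<Sum>l\<le>n. (-1)^(Suc l) * of_nat (Suc n choose Suc l) * f (Suc l))"
    by (subst sum.atMost_Suc_shift) simp
  also have "\<dots> = f 0 - (\<Sum>l\<le>n. (-1)^l * of_nat (n choose l) * f (Suc l))
                 - (\<Sum>l\<le>n. (-1)^l * of_nat (n choose Suc l) * f (Suc l))"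
    by (simp add: sum_subtractf[symmetric] sum.distrib[symmetric] algebra_simps sum_negf[symmetric])
  also have "(\<Sum>l\<le>n. (-1)^l * of_nat (n choose Suc l) * f (Suc l))
      = - ((\<Sum>l\<le>Suc n. (-1)^l * of_nat (n choose l) * f l) - f 0)"
    by (subst sum.atMost_Suc_shift) (simp add: sum_negf[symmetric])
  also have "(\<Sum>l\<le>Suc n. (-1)^l * of_nat (n choose l) * f l) = (\<Sum>l\<le>n. (-1)^l * of_nat (n choose l) * f l)"
    by (simp add: binomial_eq_0)
  finally show ?thesis by (simp add: sum_subtractf algebra_simps)
qed

lemma alternating_sum_choose_times_choose_eq_0:
  assumes "b < n"
  shows "(\<Sum>l\<le>n. (-1)^l * of_nat (n choose l) * of_nat ((a + l) choose b) :: 'a::comm_ring_1) = 0"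
  using assms
proof (induction n arbitrary: a b)
  case 0
  then show ?case by simp
next
  case (Suc n)
  show ?case
  proof (cases b)
    case 0
    then show ?thesis by (subst alternating_sum_choose_Suc) simp
  next
    case (Suc b')
    have "(\<Sum>l\<le>Suc n. (-1)^l * of_nat (Suc n choose l) * of_nat ((a + l) choose b) :: 'a)
        = - (\<Sum>l\<le>n. (-1)^l * of_nat (n choose l) * of_nat ((a + l) choose b'))"
      by (subst alternating_sum_choose_Suc) (simp add: Suc sum_negf[symmetric])
    then show ?thesis using Suc.IH[of b' a] Suc.prems Suc by simp
  qed
qed

lemma alternating_sum_choose_Suc_times_choose:
  assumes "j \<le> m"
  shows "(\<Sum>k\<le>m. (-1)^k * of_nat (Suc m choose Suc k) * of_nat ((m + k + 1) choose (m - j)))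
       = (of_nat (m choose j) :: 'a::comm_ring_1)"
proof -
  have "(\<Sum>l\<le>Suc m. (-1)^l * of_nat (Suc m choose l) * of_nat ((m + l) choose (m - j)) :: 'a) = 0"
    by (rule alternating_sum_choose_times_choose_eq_0) simp
  moreover have "(\<Sum>l\<le>Suc m. (-1)^l * of_nat (Suc m choose l) * of_nat ((m + l) choose (m - j)) :: 'a)
      = of_nat (m choose j)
        - (\<Sum>k\<le>m. (-1)^k * of_nat (Suc m choose Suc k) * of_nat ((m + k + 1) choose (m - j)))"
    by (simp only: sum.atMost_Suc_shift)
       (simp add: binomial_symmetric[OF assms, symmetric] sum_negf[symmetric])
  ultimately show ?thesis by simp
qed

lemma sum_choose_lower_times_choose:
  "(\<Sum>x\<le>n. ((x + k) choose k) * ((n - x) choose j)) = (n + k + 1) choose (k + j + 1)"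
proof (induction n arbitrary: j)
  case 0
  then show ?case by (cases j) auto
next
  case (Suc n)
  show ?case
  proof (cases j)
    case 0
    then show ?thesis using Suc.IH[of 0] by simp
  next
    case (Suc j')
    have "(\<Sum>x\<le>Suc n. ((x + k) choose k) * ((Suc n - x) choose j))
        = (\<Sum>x\<le>n. ((x + k) choose k) * ((Suc n - x) choose j))"
      using Suc by simp
    also have "\<dots> = (\<Sum>x\<le>n. ((x + k) choose k) * ((n - x) choose j) + ((x + k) choose k) * ((n - x) choose j'))"
      by (intro sum.cong) (auto simp: Suc Suc_diff_le distrib_left)
    also have "\<dots> = (Suc n + k + 1) choose (k + j + 1)"
      by (simp only: sum.distrib Suc.IH) (simp add: Suc)
    finally show ?thesis .
  qed
qed

lemma pochhammer_of_nat_plus_1: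
  "pochhammer (of_nat a + 1) k = (fact (a + k) / fact a :: 'a::field_char_0)"
proof -
  have "fact (a + k) = (fact a * pochhammer (of_nat a + 1) k :: 'a)"
    by (simp add: pochhammer_fact pochhammer_product' add.commute)
  then show ?thesis by (simp add: field_simps)
qed

lemma pochhammer_minus_of_nat:
  assumes "k \<le> m"
  shows "pochhammer (- of_nat m) k = ((-1)^k * fact m / fact (m - k) :: 'a::field_char_0)"
proof -
  have "pochhammer (- of_nat m) k = ((-1)^k * pochhammer (of_nat (m - k) + 1) k :: 'a)"
    using assms by (simp add: pochhammer_minus of_nat_diff)
  also have "\<dots> = (-1)^k * fact m / fact (m - k)"
    unfolding pochhammer_of_nat_plus_1 using assms by simp
  finally show ?thesis .
qed

lemma pochhammer_of_nat_plus_1_eq_fact_choose: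
  "pochhammer (of_nat x + 1) k = (fact k * of_nat ((x + k) choose k) :: 'a::field_char_0)"
  unfolding pochhammer_of_nat_plus_1 by (simp add: binomial_fact field_simps)

lemma prod_of_nat_diff_eq_fact_choose:
  "(\<Prod>i=0..<j. of_nat a - of_nat i) = (fact j * of_nat (a choose j) :: 'a::field_char_0)"
  by (simp add: binomial_gbinomial gbinomial_prod_rev)

section \<open>The hypergeometric polynomial\<close>

lemma hyp3F2_term_swap: "hyp3F2_term m a2 a3 b1 b2 = hyp3F2_term m a3 a2 b1 b2"
  unfolding hyp3F2_term_def by (simp add: ac_simps)

lemma hahnQ_1_0_eq_hyp3F2_term:
  "hahnQ m (-1 - y) 1 0 (-1 - M) = hyp3F2_term m (y + 1) (real m + 2) 2 (M + 1)"
proof -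
  have "real m + 1 + 0 + 1 = real m + 2" "- (-1 - y) = y + 1" "(1::real) + 1 = 2" "- (-1 - M) = M + 1"
    by simp_all
  then show ?thesis
    unfolding hahnQ_def by (simp only: hyp3F2_term_swap[of m "real m + 2"])
qed

definition shmaliy_3F2_coeff :: "nat \<Rightarrow> nat \<Rightarrow> nat \<Rightarrow> real" where
  "shmaliy_3F2_coeff m N k = (real m + 1)^2 / real N
     * (pochhammer (- real m) k * pochhammer (real m + 2) k
        / (pochhammer 2 k * pochhammer (real N + 1) k * fact k))"

definition shmaliy_3F2_poly :: "nat \<Rightarrow> nat \<Rightarrow> real poly" where
  "shmaliy_3F2_poly m N = (\<Sum>k\<le>m. smult (shmaliy_3F2_coeff m N k) (\<Prod>i=0..<k. [:real i + 1, 1:]))"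

lemma poly_shmaliy_3F2_poly:
  "poly (shmaliy_3F2_poly m N) y
     = (real m + 1)^2 / real N * hyp3F2_term m (y + 1) (real m + 2) 2 (real N + 1)"
  unfolding shmaliy_3F2_poly_def shmaliy_3F2_coeff_def hyp3F2_term_def
    poly_sum poly_smult poly_prod sum_distrib_left pochhammer_prod[of "y + 1"]
  by (intro sum.cong) (simp_all add: ac_simps)

lemma degree_shmaliy_3F2_poly: "degree (shmaliy_3F2_poly m N) \<le> m"
proof -
  have degree_prod: "degree (\<Prod>i=0..<k. [:real i + 1, 1:]) \<le> k" for k
    using degree_prod_sum_le[of "{0..<k}" "\<lambda>i. [:real i + 1, 1:]"] by simp
  show ?thesis
    unfolding shmaliy_3F2_poly_def
    by (intro degree_sum_le) (auto intro: order.trans[OF degree_smult_le] order.trans[OF degree_prod])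
qed

lemma shmaliy_3F2_coeff_eq_fact:
  assumes "k \<le> m"
  shows "shmaliy_3F2_coeff m (Suc M) k
     = (-1)^k * (real m + 1) * fact (m + k + 1) * fact M
       / (fact (m - k) * fact (k + 1) * fact (M + k + 1) * fact k)"
proof -
  have p2: "pochhammer (real m + 2) k = fact (m + k + 1) / ((real m + 1) * fact m)"
    using pochhammer_of_nat_plus_1[of "m + 1" k, where 'a=real] by (simp add: ac_simps)
  have p3: "pochhammer 2 k = (fact (k + 1) :: real)"
    using pochhammer_of_nat_plus_1[of 1 k, where 'a=real] by (simp add: ac_simps del: fact_Suc)
  have p4: "pochhammer (real (Suc M) + 1) k = fact (M + k + 1) / ((real M + 1) * fact M)"
    using pochhammer_of_nat_plus_1[of "Suc M" k, where 'a=real] by simp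
  show ?thesis
    unfolding shmaliy_3F2_coeff_def pochhammer_minus_of_nat[OF assms] p2 p3 p4
    by (simp add: divide_simps power2_eq_square add_nonneg_eq_0_iff del: fact_Suc)
qed

lemma shmaliy_3F2_coeff_times_choose:
  assumes "k \<le> m" "j \<le> m" "m \<le> M"
  shows "shmaliy_3F2_coeff m (Suc M) k * fact k * real ((M + k + 1) choose (k + j + 1))
       = (-1)^k * real (Suc m choose Suc k) * real ((m + k + 1) choose (m - j))
         * (real (M choose j) / real (m choose j))"
proof -
  have b1: "real ((M + k + 1) choose (k + j + 1)) = fact (M + k + 1) / (fact (k + j + 1) * fact (M - j))"
    using assms binomial_fact[of "k + j + 1" "M + k + 1", where 'a=real] by (simp del: fact_Suc)
  have b2: "real (Suc m choose Suc k) = (real m + 1) * fact m / (fact (k + 1) * fact (m - k))"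
    using assms binomial_fact[of "Suc k" "Suc m", where 'a=real] by (simp del: binomial_Suc_Suc)
  have "m + k + 1 - (m - j) = k + j + 1"
    using assms by simp
  then have b3: "real ((m + k + 1) choose (m - j)) = fact (m + k + 1) / (fact (m - j) * fact (k + j + 1))"
    using binomial_fact[of "m - j" "m + k + 1", where 'a=real] by (simp del: fact_Suc)
  have b4: "real (M choose j) = fact M / (fact j * fact (M - j))"
    using assms binomial_fact[of j M] by simp
  have b5: "real (m choose j) = fact m / (fact j * fact (m - j))"
    using assms binomial_fact[of j m] by simp
  show ?thesis
    unfolding shmaliy_3F2_coeff_eq_fact[OF assms(1)] b1 b2 b3 b4 b5
    by (simp add: divide_simps add_nonneg_eq_0_iff del: fact_Suc)
qed

lemma shmaliy_3F2_binomial_moment: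
  assumes "j \<le> m" "m \<le> M"
  shows "(\<Sum>x\<le>M. poly (shmaliy_3F2_poly m (Suc M)) (real x) * real ((M - x) choose j))
       = real (M choose j)"
proof -
  define w where "w k = shmaliy_3F2_coeff m (Suc M) k * fact k" for k
  have "poly (\<Prod>i=0..<k. [:real i + 1, 1:]) (real x) = pochhammer (real x + 1) k" for x k
    unfolding poly_prod pochhammer_prod by (simp add: ac_simps)
  then have "poly (shmaliy_3F2_poly m (Suc M)) (real x) = (\<Sum>k\<le>m. w k * real ((x + k) choose k))" for x
    unfolding shmaliy_3F2_poly_def w_def poly_sum poly_smult
    by (simp add: pochhammer_of_nat_plus_1_eq_fact_choose mult.assoc)
  then have "(\<Sum>x\<le>M. poly (shmaliy_3F2_poly m (Suc M)) (real x) * real ((M - x) choose j))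
      = (\<Sum>k\<le>m. w k * real (\<Sum>x\<le>M. ((x + k) choose k) * ((M - x) choose j)))"
    by (simp add: sum_distrib_left sum_distrib_right mult.assoc sum.swap[of _ "{..M}"])
  also have "\<dots> = (\<Sum>k\<le>m. w k * real ((M + k + 1) choose (k + j + 1)))"
    by (simp only: sum_choose_lower_times_choose)
  also have "\<dots> = (\<Sum>k\<le>m. (-1)^k * real (Suc m choose Suc k) * real ((m + k + 1) choose (m - j)))
                   * (real (M choose j) / real (m choose j))"
    unfolding sum_distrib_right w_def
    by (intro sum.cong refl) (simp only: atMost_iff assms shmaliy_3F2_coeff_times_choose)
  also have "\<dots> = real (M choose j)"
    unfolding alternating_sum_choose_Suc_times_choose[OF assms(1)] using assms by simp
  finally show ?thesis .
qed

lemma reproduces_value_at_0_shmaliy_3F2_poly: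
  assumes "m + 1 \<le> N"
  shows "reproduces_value_at_0 m N (poly (shmaliy_3F2_poly m N))"
proof -
  obtain M where N: "N = Suc M" and "m \<le> M"
    using assms by (cases N) auto
  define b where "b j = (\<Prod>i=0..<j. [:real M - real i, -1:])" for j
  have poly_b: "poly (b j) y = (\<Prod>i=0..<j. real M - real i - y)" for j y
    unfolding b_def poly_prod by simp
  show ?thesis
  proof (rule reproduces_value_at_0_if_basis[where b = b])
    fix j
    assume "j \<le> m"
    have "\<forall>i\<in>{0..<j}. [:real M - real i, -1:] \<noteq> 0"
      by simp
    then show "degree (b j) = j"
      unfolding b_def by (simp add: degree_prod_eq_sum_degree)
    show "b j \<noteq> 0"
      unfolding b_def by (simp add: prod_zero_iff)
    have "poly (b j) (real x) = fact j * real ((M - x) choose j)" if "x \<le> M" for x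
      unfolding poly_b using that
      by (simp add: prod_of_nat_diff_eq_fact_choose[symmetric] of_nat_diff algebra_simps)
    then have "(\<Sum>x<N. poly (shmaliy_3F2_poly m N) (real x) * poly (b j) (real x))
        = fact j * (\<Sum>x\<le>M. poly (shmaliy_3F2_poly m (Suc M)) (real x) * real ((M - x) choose j))"
      unfolding N lessThan_Suc_atMost sum_distrib_left by (intro sum.cong) auto
    also have "\<dots> = poly (b j) 0"
      unfolding shmaliy_3F2_binomial_moment[OF \<open>j \<le> m\<close> \<open>m \<le> M\<close>] poly_b
      by (simp add: prod_of_nat_diff_eq_fact_choose)
    finally show "(\<Sum>x<N. poly (shmaliy_3F2_poly m N) (real x) * poly (b j) (real x)) = poly (b j) 0" .
  qed
qed

theorem mainTheorem1:
  fixes m N n :: nat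
  assumes "N \<ge> m + 1" and "n \<le> N - 1"
  shows "shmaliy_h m (real n) N
           = (real m + 1)^2 / real N * hyp3F2_term m (real n + 1) (real m + 2) 2 (real N + 1)
       \<and> shmaliy_h m (real n) N
           = (real m + 1)^2 / real N * hahnQ m (-1 - real n) 1 0 (-1 - real N)"
proof -
  have "shmaliy_h m (real n) N = poly (shmaliy_poly m N) (real n)"
    by (simp add: poly_shmaliy_poly)
  also have "\<dots> = poly (shmaliy_3F2_poly m N) (real n)"
    using assms
    by (intro reproduces_value_at_0_unique[OF reproduces_value_at_0_shmaliy_poly
          reproduces_value_at_0_shmaliy_3F2_poly degree_shmaliy_poly degree_shmaliy_3F2_poly]) auto
  also have "\<dots> = (real m + 1)^2 / real N * hyp3F2_term m (real n + 1) (real m + 2) 2 (real N + 1)"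
    by (rule poly_shmaliy_3F2_poly)
  finally show ?thesis
    by (simp add: hahnQ_1_0_eq_hyp3F2_term)
qed

end
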